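(* For integers $i,j\ge1$ with $i\neq j$, the central element $m_{i,i,j}=m_{i,i,j}(L_1,\dots,L_4)\in\mathbb Z S_4$ satisfies \begin{align*} \langle 1,m_{i,i,j}\rangle&=\tfrac{1}{24}(1+(-1)^j)\big(6^i+2^i3^j+2^j3^i+9(-1)^i(2^i+2^j)+9\cdot 2^i\big),\\ \langle s_1,m_{i,i,j}\rangle&=\tfrac{1}{24}(1-(-1)^j)\big(6^i+2^i3^j+2^j3^i+3(-1)^i(2^i+2^j)-3\cdot 2^i\big),\\ \langle s_{12},m_{i,i,j}\rangle&=\tfrac{1}{24}(1+(-1)^j)\big(6^i+2^i3^j+2^j3^i\big),\\ \langle s_{13},m_{i,i,j}\rangle&=\tfrac{1}{24}(1+(-1)^j)\big(6^i+2^i3^j+2^j3^i-3(-1)^i(2^i+2^j)-3\cdot 2^i\big),\\ \langle s_{123},m_{i,i,j}\rangle&=\tfrac{1}{24}(1-(-1)^j)\big(6^i+2^i3^j+2^j3^i-3(-1)^i(2^i+2^j)+3\cdot 2^i\big). \end{align*}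
   Context: $S_4$ is the symmetric group on $\{1,2,3,4\}$, $\mathbb Z S_4$ its integral group ring. Let $s_1=(1\,2)$, $s_2=(2\,3)$, $s_3=(3\,4)$, $s_{12}=s_1s_2$, $s_{13}=s_1s_3$, $s_{123}=s_1s_2s_3$. The Jucys–Murphy elements are $L_1=0$ and $L_i=\sum_{k=1}^{i-1}(k\ i)$ for $i=2,3,4$; they pairwise commute. For a partition $\mu=(\mu_1,\dots,\mu_r)$, $m_\mu(x_1,\dots,x_4)$ is the monomial symmetric polynomial: the sum of all distinct monomials $x_1^{\alpha_1}\cdots x_4^{\alpha_4}$ with $(\alpha_1,\dots,\alpha_4)$ a rearrangement of $(\mu_1,\dots,\mu_r,0,\dots,0)$. A subscript list such as $m_{i,i,j}$ denotes $m_\mu(L_1,\dots,L_4)$ where $\mu$ is the partition whose parts are the listed entries (sorted decreasingly). For $w\in S_4$ and $h\in\mathbb Z S_4$, $\langle w,h\rangle$ denotes the coefficient of $w$ in $h$; for central $h$ this equals the coefficient of the class sum of the conjugacy class of $w$. *)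

theory Defs
  imports "HOL-Combinatorics.Combinatorics"
begin

text \<open>Elements of the integral group ring Z S_4 are coefficient functions
  (nat => nat) => int (only values on S4 matter); the product is the
  convolution with delta_u * delta_v = delta_(u o v).\<close>

type_synonym perm = "nat \<Rightarrow> nat"
type_synonym gring = "perm \<Rightarrow> int"

definition S4 :: "perm set" where
  "S4 = {p. p permutes {1..4::nat}}"

definition gdelta :: "perm \<Rightarrow> gring" where
  "gdelta u = (\<lambda>w. if w = u then 1 else 0)"

definition gone :: gring where
  "gone = gdelta id"

definition gmul :: "gring \<Rightarrow> gring \<Rightarrow> gring" where
  "gmul a b = (\<lambda>w. \<Sum>u\<in>S4. a u * b (inv u \<circ> w))"

definition gpow :: "gring \<Rightarrow> nat \<Rightarrow> gring" where
  "gpow a n = ((gmul a) ^^ n) gone"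

definition JM :: "nat \<Rightarrow> gring" where
  "JM i = (\<lambda>w. \<Sum>k\<in>{1..<i}. gdelta (transpose k i) w)"

definition JM_monomial :: "(nat \<Rightarrow> nat) \<Rightarrow> gring" where
  "JM_monomial a = gmul (gpow (JM 1) (a 1)) (gmul (gpow (JM 2) (a 2))
      (gmul (gpow (JM 3) (a 3)) (gpow (JM 4) (a 4))))"

definition pad4 :: "nat list \<Rightarrow> nat \<Rightarrow> nat" where
  "pad4 mu k = (if 1 \<le> k \<and> k \<le> length mu then mu ! (k - 1) else 0)"

definition rearrangements4 :: "nat list \<Rightarrow> (nat \<Rightarrow> nat) set" where
  "rearrangements4 mu = {a. \<exists>\<sigma>. \<sigma> permutes {1..4::nat} \<and> a = pad4 mu \<circ> \<sigma>}"

definition msym_JM :: "nat list \<Rightarrow> gring" where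
  "msym_JM mu = (\<lambda>w. \<Sum>a\<in>rearrangements4 mu. JM_monomial a w)"

definition s1 :: perm where "s1 = transpose 1 2"
definition s2 :: perm where "s2 = transpose 2 3"
definition s3 :: perm where "s3 = transpose 3 4"

end

theory Submission
  imports Defs
begin

(* Write L_2, L_3, L_4 for the Jucys-Murphy elements; L_1 = 0, so every
   monomial of m_{i,i,j} with a positive exponent of L_1 vanishes and
     m_{i,i,j} = L_2^i L_3^i L_4^j + L_2^i L_3^j L_4^i + L_2^j L_3^i L_4^i.
   To evaluate such monomials we use the seminormal idempotent decomposition of the
   identity: there are ten elements F_T = 48 E_T of Z S_4, one for each standard Young
   tableau T of size 4, with  L_k F_T = c_T(k) F_T  (c_T(k) the content of the box of k in T) and
   sum_T F_T = 48 * 1.  Hence  48 * L_2^a L_3^b L_4^c = sum_T c_T(2)^a c_T(3)^b c_T(4)^c F_T,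
   and every coefficient of m_{i,i,j} is an explicit combination of powers of contents. *)

section \<open>The group ring of S_4\<close>

lemma S4_inv: "u \<in> S4 \<Longrightarrow> inv u \<in> S4"
  by (simp add: S4_def permutes_inv)

lemma S4_comp: "u \<in> S4 \<Longrightarrow> v \<in> S4 \<Longrightarrow> u \<circ> v \<in> S4"
  by (simp add: S4_def permutes_compose)

lemma S4_id: "id \<in> S4"
  by (simp add: S4_def permutes_id)

lemma S4_finite: "finite S4"
  unfolding S4_def by (rule finite_permutations) simp

lemma S4_inv_left: "u \<in> S4 \<Longrightarrow> inv u \<circ> u = id"
  unfolding S4_def using permutes_inv_o(2) by blast

lemma S4_inv_right: "u \<in> S4 \<Longrightarrow> u \<circ> inv u = id"
  unfolding S4_def using permutes_inv_o(1) by blast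

lemma transpose_in_S4: "a \<in> {1..4} \<Longrightarrow> b \<in> {1..4} \<Longrightarrow> transpose a b \<in> S4"
  unfolding S4_def by (simp add: permutes_swap_id)

text \<open>Left translation by an element of S_4 permutes S_4; this is the reindexing
  behind associativity of the convolution product.\<close>
lemma S4_left_translation: "u \<in> S4 \<Longrightarrow> bij_betw (\<lambda>v. u \<circ> v) S4 S4"
proof (rule bij_betw_byWitness[where f'="\<lambda>v. inv u \<circ> v"])
  assume u: "u \<in> S4"
  show "\<forall>a\<in>S4. inv u \<circ> (u \<circ> a) = a" using S4_inv_left[OF u] by (simp add: o_assoc)
  show "\<forall>a\<in>S4. u \<circ> (inv u \<circ> a) = a" using S4_inv_right[OF u] by (simp add: o_assoc)
  show "(\<lambda>v. u \<circ> v) ` S4 \<subseteq> S4" using u S4_comp by auto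
  show "(\<lambda>v. inv u \<circ> v) ` S4 \<subseteq> S4" using u S4_comp S4_inv by auto
qed

lemma gmul_assoc: "gmul (gmul a b) c w = gmul a (gmul b c) w"
proof -
  have "gmul (gmul a b) c w = (\<Sum>x\<in>S4. \<Sum>u\<in>S4. a u * b (inv u \<circ> x) * c (inv x \<circ> w))"
    by (simp add: gmul_def sum_distrib_right)
  also have "\<dots> = (\<Sum>u\<in>S4. a u * (\<Sum>x\<in>S4. b (inv u \<circ> x) * c (inv x \<circ> w)))"
    by (subst sum.swap) (simp add: sum_distrib_left mult.assoc)
  also have "\<dots> = (\<Sum>u\<in>S4. a u * (\<Sum>v\<in>S4. b v * c (inv v \<circ> (inv u \<circ> w))))"
  proof (rule sum.cong[OF refl])
    fix u assume u: "u \<in> S4"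
    have "(\<Sum>x\<in>S4. b (inv u \<circ> x) * c (inv x \<circ> w)) =
          (\<Sum>v\<in>S4. b (inv u \<circ> (u \<circ> v)) * c (inv (u \<circ> v) \<circ> w))"
      using sum.reindex_bij_betw[OF S4_left_translation[OF u],
              of "\<lambda>x. b (inv u \<circ> x) * c (inv x \<circ> w)"] by simp
    also have "\<dots> = (\<Sum>v\<in>S4. b v * c (inv v \<circ> (inv u \<circ> w)))"
    proof (rule sum.cong[OF refl])
      fix v assume v: "v \<in> S4"
      have "inv u \<circ> (u \<circ> v) = v" using S4_inv_left[OF u] by (simp add: o_assoc)
      moreover have "inv (u \<circ> v) = inv v \<circ> inv u"
        using o_inv_distrib u v by (metis S4_def mem_Collect_eq permutes_bij)
      ultimately show "b (inv u \<circ> (u \<circ> v)) * c (inv (u \<circ> v) \<circ> w) =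
                       b v * c (inv v \<circ> (inv u \<circ> w))"
        by (simp add: o_assoc)
    qed
    finally show "a u * (\<Sum>x\<in>S4. b (inv u \<circ> x) * c (inv x \<circ> w)) =
                  a u * (\<Sum>v\<in>S4. b v * c (inv v \<circ> (inv u \<circ> w)))" by simp
  qed
  also have "\<dots> = gmul a (gmul b c) w" by (simp add: gmul_def)
  finally show ?thesis .
qed

lemma gmul_cong:
  assumes "\<And>w. w \<in> S4 \<Longrightarrow> b w = b' w" and "w \<in> S4"
  shows "gmul a b w = gmul a b' w"
  unfolding gmul_def using assms S4_comp S4_inv by (intro sum.cong) auto

lemma gmul_scale_right: "gmul a (\<lambda>w. c * b w) w = c * gmul a b w"
  by (simp add: gmul_def sum_distrib_left mult.left_commute)

lemma gmul_sum_list_right: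
  "gmul a (\<lambda>w. \<Sum>t\<leftarrow>xs. f t w) w = (\<Sum>t\<leftarrow>xs. gmul a (f t) w)"
  by (induction xs) (simp_all add: gmul_def sum.distrib distrib_left)

lemma gmul_sum_left:
  "finite T \<Longrightarrow> gmul (\<lambda>u. \<Sum>t\<in>T. f t u) b w = (\<Sum>t\<in>T. gmul (f t) b w)"
  unfolding gmul_def sum_distrib_right by (rule sum.swap)

lemma gmul_one_left: "gmul gone b w = b w"
proof -
  have "gmul gone b w = (\<Sum>u\<in>S4. if u = id then b (inv u \<circ> w) else 0)"
    unfolding gmul_def gone_def gdelta_def by (rule sum.cong) auto
  also have "\<dots> = b w" using S4_id S4_finite by simp
  finally show ?thesis .
qed

lemma gmul_one_right: "w \<in> S4 \<Longrightarrow> gmul a gone w = a w"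
proof -
  assume w: "w \<in> S4"
  have "gmul a gone w = (\<Sum>u\<in>S4. if u = w then a u else 0)"
    unfolding gmul_def gone_def gdelta_def
  proof (rule sum.cong[OF refl])
    fix u assume u: "u \<in> S4"
    have "inv u \<circ> w = id \<longleftrightarrow> u = w"
    proof
      assume "inv u \<circ> w = id"
      then have "u \<circ> (inv u \<circ> w) = u" by simp
      then show "u = w" using S4_inv_right[OF u] by (simp add: o_assoc)
    qed (use S4_inv_left[OF u] in simp)
    then show "a u * (if inv u \<circ> w = id then 1 else 0) = (if u = w then a u else 0)" by simp
  qed
  also have "\<dots> = a w" using w S4_finite by simp
  finally show ?thesis .
qed

lemma gmul_delta_left: "u \<in> S4 \<Longrightarrow> gmul (gdelta u) b w = b (inv u \<circ> w)"
proof -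
  assume u: "u \<in> S4"
  have "gmul (gdelta u) b w = (\<Sum>x\<in>S4. if x = u then b (inv x \<circ> w) else 0)"
    unfolding gmul_def gdelta_def by (rule sum.cong) auto
  also have "\<dots> = b (inv u \<circ> w)" using u S4_finite by simp
  finally show ?thesis .
qed

lemma gpow_eigen:
  assumes eig: "\<And>w. w \<in> S4 \<Longrightarrow> gmul A F w = c * F w" and w: "w \<in> S4"
  shows "gmul (gpow A n) F w = c ^ n * F w"
  using w
proof (induction n arbitrary: w)
  case 0
  then show ?case by (simp add: gpow_def gmul_one_left)
next
  case (Suc n)
  have "gmul (gpow A (Suc n)) F w = gmul A (gmul (gpow A n) F) w"
    by (simp add: gpow_def gmul_assoc)
  also have "\<dots> = gmul A (\<lambda>w. c ^ n * F w) w"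
    by (rule gmul_cong) (use Suc in auto)
  also have "\<dots> = c ^ n * (c * F w)" by (simp add: gmul_scale_right eig Suc.prems)
  finally show ?case by simp
qed

text \<open>The monomial L_2^a L_3^b L_4^c; all other Jucys-Murphy monomials of interest
  reduce to these because L_1 = 0.\<close>
definition JM_mono3 :: "nat \<Rightarrow> nat \<Rightarrow> nat \<Rightarrow> gring" where
  "JM_mono3 a b c = gmul (gpow (JM 2) a) (gmul (gpow (JM 3) b) (gpow (JM 4) c))"

lemma JM_mono3_eigen:
  assumes e2: "\<And>w. w \<in> S4 \<Longrightarrow> gmul (JM 2) F w = c2 * F w"
      and e3: "\<And>w. w \<in> S4 \<Longrightarrow> gmul (JM 3) F w = c3 * F w"
      and e4: "\<And>w. w \<in> S4 \<Longrightarrow> gmul (JM 4) F w = c4 * F w"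
      and w: "w \<in> S4"
  shows "gmul (JM_mono3 a b c) F w = c2 ^ a * c3 ^ b * c4 ^ c * F w"
proof -
  have e34: "gmul (gmul (gpow (JM 3) b) (gpow (JM 4) c)) F v = c3 ^ b * c4 ^ c * F v"
    if v: "v \<in> S4" for v
  proof -
    have "gmul (gmul (gpow (JM 3) b) (gpow (JM 4) c)) F v
        = gmul (gpow (JM 3) b) (\<lambda>v. c4 ^ c * F v) v"
      unfolding gmul_assoc by (rule gmul_cong) (use v gpow_eigen[OF e4] in auto)
    also have "\<dots> = c4 ^ c * (c3 ^ b * F v)" by (simp add: gmul_scale_right gpow_eigen[OF e3] v)
    finally show ?thesis by simp
  qed
  have "gmul (JM_mono3 a b c) F w
      = gmul (gpow (JM 2) a) (gmul (gmul (gpow (JM 3) b) (gpow (JM 4) c)) F) w"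
    unfolding JM_mono3_def by (rule gmul_assoc)
  also have "\<dots> = gmul (gpow (JM 2) a) (\<lambda>v. (c3 ^ b * c4 ^ c) * F v) w"
    by (rule gmul_cong) (use w e34 in auto)
  also have "\<dots> = (c3 ^ b * c4 ^ c) * (c2 ^ a * F w)"
    by (simp add: gmul_scale_right gpow_eigen[OF e2] w)
  finally show ?thesis by simp
qed

section \<open>Enumerating S_4 by words\<close>

definition word_perm :: "nat list \<Rightarrow> perm" where
  "word_perm ws = (\<lambda>x. if 1 \<le> x \<and> x \<le> 4 then ws ! (x - 1) else x)"

definition S4_words :: "nat list list" where
  "S4_words = [[1,2,3,4], [1,2,4,3], [1,3,2,4], [1,3,4,2], [1,4,2,3], [1,4,3,2],
    [2,1,3,4], [2,1,4,3], [2,3,1,4], [2,3,4,1], [2,4,1,3], [2,4,3,1],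
    [3,1,2,4], [3,1,4,2], [3,2,1,4], [3,2,4,1], [3,4,1,2], [3,4,2,1],
    [4,1,2,3], [4,1,3,2], [4,2,1,3], [4,2,3,1], [4,3,1,2], [4,3,2,1]]"

lemma length4_cases: "length ws = 4 \<Longrightarrow> \<exists>a b c d. ws = [a,b,c,d]"
  by (cases ws; cases "tl ws"; cases "tl (tl ws)"; cases "tl (tl (tl ws))"; simp)

lemma word_perm_word: "length ws = 4 \<Longrightarrow> map (word_perm ws) [1,2,3,4] = ws"
  using length4_cases[of ws] by (auto simp: word_perm_def)

lemma word_perm_inj: "length ws = 4 \<Longrightarrow> length vs = 4 \<Longrightarrow> word_perm ws = word_perm vs \<Longrightarrow> ws = vs"
  using word_perm_word by metis

lemma word_perm_4: "word_perm [a,b,c,d] =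
    (\<lambda>x. if x = 1 then a else if x = 2 then b else if x = 3 then c else if x = 4 then d else x)"
proof
  fix x
  show "word_perm [a,b,c,d] x =
        (if x = 1 then a else if x = 2 then b else if x = 3 then c else if x = 4 then d else x)"
    by (cases "x = 1"; cases "x = 2"; cases "x = 3"; cases "x = 4"; simp add: word_perm_def)
qed

lemma S4_words_length: "ws \<in> set S4_words \<Longrightarrow> length ws = 4"
  by (auto simp: S4_words_def)

lemma S4_words_arrangement:
  "ws \<in> set S4_words \<Longrightarrow> \<exists>a b c d. ws = [a,b,c,d] \<and> {a,b,c,d} = {1,2,3,4::nat}"
  unfolding S4_words_def by (simp; elim disjE; simp add: insert_commute)

lemma word_perm_permutes:
  assumes "{a,b,c,d} = {1,2,3,4::nat}"
  shows "word_perm [a,b,c,d] \<in> S4"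
proof -
  let ?f = "word_perm [a,b,c,d]" and ?A = "{1,2,3,4::nat}"
  have img: "?f ` ?A = ?A" using assms by (auto simp: word_perm_4)
  then have "inj_on ?f ?A" by (intro eq_card_imp_inj_on) simp_all
  with img have "bij_betw ?f ?A ?A" by (simp add: bij_betw_def)
  moreover have "\<And>x. x \<notin> ?A \<Longrightarrow> ?f x = x" by (simp add: word_perm_4)
  ultimately have "?f permutes ?A" by (rule bij_imp_permutes)
  moreover have "{1..4::nat} = ?A" by auto
  ultimately show ?thesis unfolding S4_def by simp
qed

lemma S4_words_in_S4: "ws \<in> set S4_words \<Longrightarrow> word_perm ws \<in> S4"
  using S4_words_arrangement word_perm_permutes by blast

text \<open>The 24 distinct words exhaust S_4, which has 4! = 24 elements.\<close>
lemma S4_by_words: "S4 = word_perm ` set S4_words"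
proof (rule card_subset_eq[symmetric])
  show "finite S4" by (rule S4_finite)
  show "word_perm ` set S4_words \<subseteq> S4" using S4_words_in_S4 by auto
  have "inj_on word_perm (set S4_words)"
    by (rule inj_onI) (use word_perm_inj S4_words_length in blast)
  then have "card (word_perm ` set S4_words) = 24"
    by (simp add: card_image distinct_card) (simp add: S4_words_def)
  moreover have "card S4 = 24" unfolding S4_def
    using card_permutations[of "{1..4::nat}" 4] by (simp add: fact_numeral)
  ultimately show "card (word_perm ` set S4_words) = card S4" by simp
qed

lemma S4_word_cases:
  assumes "w \<in> S4" obtains ws where "ws \<in> set S4_words" and "w = word_perm ws"
  using assms S4_by_words by auto

lemma word_in_S4_words: "length ws = 4 \<Longrightarrow> word_perm ws \<in> S4 \<Longrightarrow> ws \<in> set S4_words"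
  by (metis S4_word_cases word_perm_inj S4_words_length)

lemma transpose_word_perm:
  assumes "a \<in> {1..4}" "b \<in> {1..4}" "length ws = 4"
  shows "transpose a b \<circ> word_perm ws = word_perm (map (transpose a b) ws)"
proof
  fix x
  show "(transpose a b \<circ> word_perm ws) x = word_perm (map (transpose a b) ws) x"
    using assms by (auto simp: word_perm_def transpose_def)
qed

section \<open>Simultaneous eigenvectors of the Jucys-Murphy elements\<close>

definition word_coeff :: "int list \<Rightarrow> nat list \<Rightarrow> int" where
  "word_coeff vals ws = (case map_of (zip S4_words vals) ws of Some c \<Rightarrow> c | None \<Rightarrow> 0)"

definition eigen_elem :: "int list \<Rightarrow> gring" where
  "eigen_elem vals w = (if w \<in> S4 then word_coeff vals (map w [1,2,3,4]) else 0)"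

text \<open>Executable form of the equation L_k F = c F for F given by coefficients vals:
  the coefficient of w in L_k F is the sum over k' < k of the coefficient of (k' k) w.\<close>
definition JM_eigen_check :: "nat \<Rightarrow> int \<Rightarrow> int list \<Rightarrow> bool" where
  "JM_eigen_check k c vals = list_all (\<lambda>ws.
     (\<Sum>k'\<leftarrow>[1..<k]. word_coeff vals (map (transpose k' k) ws)) = c * word_coeff vals ws) S4_words"

text \<open>For each of the ten standard Young tableaux T of size 4: the contents
  (c_T(2), c_T(3), c_T(4)) of the boxes of 2, 3, 4, and the coefficients along S4_words
  of F_T = 48 E_T, where E_T is the primitive idempotent of Young's seminormal form.
  Only the eigenvalue equations and the sum of the F_T are used below.\<close>
definition eigen_table :: "(int \<times> int \<times> int \<times> int list) list" where
  "eigen_table = [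
    (1, 2, 3, [2, 2, 2, 2, 2, 2, 2, 2, 2, 2, 2, 2, 2, 2, 2, 2, 2, 2, 2, 2, 2, 2, 2, 2]),
    (1, 2, -1, [6, -2, 6, -2, -2, -2, 6, -2, 6, -2, -2, -2, 6, -2, 6, -2, -2, -2, -2, -2, -2, -2, -2, -2]),
    (1, -1, 2, [6, 2, -3, -1, -1, 5, 6, 2, -3, -1, -1, 5, -3, -1, -3, -1, -4, -4, -1, 5, -1, 5, -4, -4]),
    (1, -1, 0, [4, 4, -2, -2, -2, -2, 4, 4, -2, -2, -2, -2, -2, -2, -2, -2, 4, 4, -2, -2, -2, -2, 4, 4]),
    (1, -1, -2, [6, -6, -3, 3, 3, -3, 6, -6, -3, 3, 3, -3, -3, 3, -3, 3, 0, 0, 3, -3, 3, -3, 0, 0]),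
    (-1, 1, 2, [6, 6, 3, 3, 3, 3, -6, -6, -3, -3, -3, -3, -3, -3, 3, 3, 0, 0, -3, -3, 3, 3, 0, 0]),
    (-1, 1, 0, [4, -4, 2, -2, -2, 2, -4, 4, -2, 2, 2, -2, -2, 2, 2, -2, 4, -4, 2, -2, -2, 2, -4, 4]),
    (-1, 1, -2, [6, -2, 3, -1, -1, -5, -6, 2, -3, 1, 1, 5, -3, 1, 3, -1, -4, 4, 1, 5, -1, -5, 4, -4]),
    (-1, -2, 1, [6, 2, -6, -2, -2, 2, -6, -2, 6, 2, 2, -2, 6, 2, -6, -2, -2, 2, 2, -2, -2, 2, 2, -2]),
    (-1, -2, -3, [2, -2, -2, 2, 2, -2, -2, 2, 2, -2, -2, 2, 2, -2, -2, 2, 2, -2, -2, 2, 2, -2, -2, 2])]"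

lemma eigen_table_eigen:
  "list_all (\<lambda>(c2, c3, c4, vals).
     JM_eigen_check 2 c2 vals \<and> JM_eigen_check 3 c3 vals \<and> JM_eigen_check 4 c4 vals) eigen_table"
  by code_simp

lemma eigen_table_sum:
  "list_all (\<lambda>ws. (\<Sum>t\<leftarrow>eigen_table. word_coeff (snd (snd (snd t))) ws)
                  = (if ws = [1,2,3,4] then 48 else 0)) S4_words"
  by code_simp

lemma eigen_elem_word: "ws \<in> set S4_words \<Longrightarrow> eigen_elem vals (word_perm ws) = word_coeff vals ws"
  using word_perm_word S4_words_length S4_words_in_S4 unfolding eigen_elem_def by simp

lemma JM_mult_left:
  assumes "k \<in> {2,3,4}"
  shows "gmul (JM k) b w = (\<Sum>k'\<leftarrow>[1..<k]. b (transpose k' k \<circ> w))"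
proof -
  have "gmul (JM k) b w = (\<Sum>k'\<in>{1..<k}. gmul (gdelta (transpose k' k)) b w)"
    unfolding JM_def by (rule gmul_sum_left) simp
  also have "\<dots> = (\<Sum>k'\<in>{1..<k}. b (transpose k' k \<circ> w))"
    by (rule sum.cong[OF refl]) (use assms in \<open>auto simp: gmul_delta_left transpose_in_S4\<close>)
  finally show ?thesis by (simp add: sum_list_distinct_conv_sum_set)
qed

lemma JM_eigen:
  assumes k: "k \<in> {2,3,4}" and check: "JM_eigen_check k c vals" and w: "w \<in> S4"
  shows "gmul (JM k) (eigen_elem vals) w = c * eigen_elem vals w"
proof -
  obtain ws where ws: "ws \<in> set S4_words" "w = word_perm ws" using S4_word_cases w by blast
  have len: "length ws = 4" using S4_words_length ws by simp
  have translate: "eigen_elem vals (transpose k' k \<circ> word_perm ws)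
                     = word_coeff vals (map (transpose k' k) ws)"
    if "k' \<in> set [1..<k]" for k'
  proof -
    have ab: "k' \<in> {1..4}" "k \<in> {1..4}" using k that by auto
    have eq: "transpose k' k \<circ> word_perm ws = word_perm (map (transpose k' k) ws)"
      by (rule transpose_word_perm[OF ab len])
    have "word_perm (map (transpose k' k) ws) \<in> S4"
      unfolding eq[symmetric] using transpose_in_S4[OF ab] S4_words_in_S4[OF ws(1)] S4_comp by blast
    then have "map (transpose k' k) ws \<in> set S4_words" using word_in_S4_words len by simp
    then show ?thesis using eq eigen_elem_word by simp
  qed
  have "gmul (JM k) (eigen_elem vals) w
      = (\<Sum>k'\<leftarrow>[1..<k]. word_coeff vals (map (transpose k' k) ws))"
    unfolding JM_mult_left[OF k] ws(2) using translate by (metis (no_types, lifting) map_eq_conv)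
  also have "\<dots> = c * word_coeff vals ws"
    using check ws(1) unfolding JM_eigen_check_def list_all_iff by blast
  finally show ?thesis using eigen_elem_word ws by simp
qed

lemma JM_mono3_eigen_table:
  assumes "(c2, c3, c4, vals) \<in> set eigen_table" and "w \<in> S4"
  shows "gmul (JM_mono3 a b c) (eigen_elem vals) w = c2 ^ a * c3 ^ b * c4 ^ c * eigen_elem vals w"
proof -
  have "JM_eigen_check 2 c2 vals" "JM_eigen_check 3 c3 vals" "JM_eigen_check 4 c4 vals"
    using eigen_table_eigen assms(1) unfolding list_all_iff by fastforce+
  then show ?thesis using JM_mono3_eigen JM_eigen assms(2) by simp
qed

lemma id_word: "id = word_perm [1,2,3,4]"
  by (rule ext) (simp add: word_perm_4)

lemma eigen_table_sum_elem:
  assumes w: "w \<in> S4"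
  shows "(\<Sum>t\<leftarrow>eigen_table. eigen_elem (snd (snd (snd t))) w) = 48 * gone w"
proof -
  obtain ws where ws: "ws \<in> set S4_words" "w = word_perm ws" using S4_word_cases w by blast
  have "w = id \<longleftrightarrow> ws = [1,2,3,4]"
    using ws word_perm_inj[OF S4_words_length[OF ws(1)], of "[1,2,3,4]"] id_word by auto
  then show ?thesis
    using eigen_table_sum ws unfolding list_all_iff
    by (simp add: eigen_elem_word gone_def gdelta_def)
qed

text \<open>Expanding 48 = 48 * 1 along the idempotents: the key formula
  48 L_2^a L_3^b L_4^c = sum_T c_T(2)^a c_T(3)^b c_T(4)^c F_T.\<close>
lemma JM_mono3_expansion:
  assumes w: "w \<in> S4"
  shows "48 * JM_mono3 a b c w =
         (\<Sum>(c2, c3, c4, vals)\<leftarrow>eigen_table. c2 ^ a * c3 ^ b * c4 ^ c * eigen_elem vals w)"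
proof -
  have "48 * JM_mono3 a b c w = gmul (JM_mono3 a b c) (\<lambda>w. 48 * gone w) w"
    by (simp add: gmul_scale_right gmul_one_right w)
  also have "\<dots> = gmul (JM_mono3 a b c) (\<lambda>w. \<Sum>t\<leftarrow>eigen_table. eigen_elem (snd (snd (snd t))) w) w"
    by (rule gmul_cong) (use w eigen_table_sum_elem in auto)
  also have "\<dots> = (\<Sum>t\<leftarrow>eigen_table. gmul (JM_mono3 a b c) (eigen_elem (snd (snd (snd t)))) w)"
    by (rule gmul_sum_list_right)
  also have "\<dots> = (\<Sum>(c2, c3, c4, vals)\<leftarrow>eigen_table. c2 ^ a * c3 ^ b * c4 ^ c * eigen_elem vals w)"
    by (rule arg_cong[where f=sum_list], rule map_cong[OF refl])
       (use JM_mono3_eigen_table w in \<open>auto split: prod.split\<close>)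
  finally show ?thesis .
qed

section \<open>Reduction of m_{i,i,j} to three monomials\<close>

definition exps_of_list :: "nat list \<Rightarrow> nat \<Rightarrow> nat" where
  "exps_of_list es = (\<lambda>k. if 1 \<le> k \<and> k \<le> 4 then es ! (k - 1) else 0)"

lemma exps_of_list_values: "length es = 4 \<Longrightarrow> map (exps_of_list es) [1,2,3,4] = es"
  using length4_cases[of es] by (auto simp: exps_of_list_def)

lemma pad4_word_perm:
  assumes "ws \<in> set S4_words" and "length mu = 3"
  shows "pad4 mu \<circ> word_perm ws = exps_of_list (map (pad4 mu) ws)"
proof
  fix x
  obtain a b c d where ws: "ws = [a,b,c,d]" "{a,b,c,d} = {1,2,3,4::nat}"
    using S4_words_arrangement assms(1) by blast
  have "a \<in> {1,2,3,4}" "b \<in> {1,2,3,4}" "c \<in> {1,2,3,4}" "d \<in> {1,2,3,4}" using ws(2) by blast+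
  then show "(pad4 mu \<circ> word_perm ws) x = exps_of_list (map (pad4 mu) ws) x"
    using assms(2) unfolding ws(1)
    by (cases "x = 1"; cases "x = 2"; cases "x = 3"; cases "x = 4";
        auto simp: word_perm_4 exps_of_list_def pad4_def)
qed

lemma rearrangements4_words:
  assumes "length mu = 3"
  shows "rearrangements4 mu = exps_of_list ` set (map (map (pad4 mu)) S4_words)"
proof -
  have "rearrangements4 mu = (\<lambda>s. pad4 mu \<circ> s) ` S4"
    unfolding rearrangements4_def S4_def by auto
  also have "\<dots> = (\<lambda>ws. exps_of_list (map (pad4 mu) ws)) ` set S4_words"
    unfolding S4_by_words image_image using pad4_word_perm[OF _ assms] by (intro image_cong) auto
  finally show ?thesis by (simp add: image_image)
qed

lemma JM_monomial_L1: "a 1 \<noteq> 0 \<Longrightarrow> JM_monomial a w = 0"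
proof -
  assume "a 1 \<noteq> 0"
  then obtain n where n: "a 1 = Suc n" by (cases "a 1") auto
  have "JM 1 = (\<lambda>w. 0)" by (simp add: JM_def fun_eq_iff)
  then have "gpow (JM 1) (Suc n) = (\<lambda>w. 0)" by (simp add: gpow_def gmul_def)
  then have "gpow (JM 1) (a 1) = (\<lambda>w. 0)" by (simp only: n)
  then show ?thesis by (simp add: JM_monomial_def gmul_def)
qed

lemma JM_monomial_mono3: "JM_monomial (exps_of_list [0,a,b,c]) w = JM_mono3 a b c w"
  by (simp add: JM_monomial_def exps_of_list_def gpow_def gmul_one_left JM_mono3_def)

lemma msym_JM_iij:
  fixes i j :: nat
  assumes "i \<ge> 1" "j \<ge> 1" "i \<noteq> j"
  shows "msym_JM (rev (sort [i, i, j])) w = JM_mono3 i i j w + JM_mono3 i j i w + JM_mono3 j i i w"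
proof -
  define mu where "mu = rev (sort [i, i, j])"
  have len: "length mu = 3" by (simp add: mu_def)
  define V where "V = set (map (map (pad4 mu)) S4_words)"
  have lenV: "\<And>v. v \<in> V \<Longrightarrow> length v = 4" unfolding V_def using S4_words_length by auto
  have "inj_on exps_of_list V" by (rule inj_onI) (metis exps_of_list_values lenV)
  then have "msym_JM mu w = (\<Sum>v\<in>V. JM_monomial (exps_of_list v) w)"
    unfolding msym_JM_def rearrangements4_words[OF len] V_def[symmetric] by (simp add: sum.reindex)
  also have "\<dots> = (\<Sum>v\<in>V \<inter> {v. hd v = 0}. JM_monomial (exps_of_list v) w)"
  proof (rule sum.mono_neutral_right)
    show "\<forall>v\<in>V - V \<inter> {v. hd v = 0}. JM_monomial (exps_of_list v) w = 0"
    proof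
      fix v assume v: "v \<in> V - V \<inter> {v. hd v = 0}"
      then have "length v = 4" using lenV by blast
      then have "exps_of_list v 1 = hd v" by (cases v) (auto simp: exps_of_list_def)
      then show "JM_monomial (exps_of_list v) w = 0" using v JM_monomial_L1 by auto
    qed
  qed (auto simp: V_def)
  also have "V \<inter> {v. hd v = 0} = {[0,i,i,j], [0,i,j,i], [0,j,i,i]}"
    using assms unfolding V_def mu_def by (cases "i < j") (auto simp: S4_words_def pad4_def)
  finally show ?thesis using assms by (simp add: mu_def JM_monomial_mono3)
qed

section \<open>The coefficients of m_{i,i,j}\<close>

lemma msym_JM_iij_coefficient:
  fixes i j :: nat
  assumes "i \<ge> 1" "j \<ge> 1" "i \<noteq> j" and ws: "ws \<in> set S4_words"
  shows "48 * msym_JM (rev (sort [i, i, j])) (word_perm ws) =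
         (\<Sum>(c2, c3, c4, vals)\<leftarrow>eigen_table.
            (c2^i * c3^i * c4^j + c2^i * c3^j * c4^i + c2^j * c3^i * c4^i) * word_coeff vals ws)"
proof -
  let ?w = "word_perm ws"
  have "48 * msym_JM (rev (sort [i, i, j])) ?w =
        48 * JM_mono3 i i j ?w + 48 * JM_mono3 i j i ?w + 48 * JM_mono3 j i i ?w"
    unfolding msym_JM_iij[OF assms(1-3)] by (simp only: distrib_left)
  also have "\<dots> = (\<Sum>(c2, c3, c4, vals)\<leftarrow>eigen_table.
            (c2^i * c3^i * c4^j + c2^i * c3^j * c4^i + c2^j * c3^i * c4^i) * eigen_elem vals ?w)"
    unfolding JM_mono3_expansion[OF S4_words_in_S4[OF ws]] sum_list_addf[symmetric]
    by (rule arg_cong[where f=sum_list], rule map_cong) (auto simp: algebra_simps split: prod.split)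
  finally show ?thesis by (simp only: eigen_elem_word[OF ws])
qed

lemma s1_word: "s1 = word_perm [2,1,3,4]"
  by (rule ext) (simp add: word_perm_4 s1_def transpose_def)

lemma s12_word: "s1 \<circ> s2 = word_perm [2,3,1,4]"
  by (rule ext) (simp add: word_perm_4 s1_def s2_def transpose_def)

lemma s13_word: "s1 \<circ> s3 = word_perm [2,1,4,3]"
  by (rule ext) (simp add: word_perm_4 s1_def s3_def transpose_def)

lemma s123_word: "s1 \<circ> s2 \<circ> s3 = word_perm [2,3,4,1]"
  by (rule ext) (simp add: word_perm_4 s1_def s2_def s3_def transpose_def)

theorem proposition2p5:
  fixes i j :: nat
  assumes "i \<ge> 1" and "j \<ge> 1" and "i \<noteq> j"
  defines "m \<equiv> msym_JM (rev (sort [i, i, j]))"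
  shows "of_int (m id) = (1/24::rat) * (1 + (-1)^j) *
            (6^i + 2^i*3^j + 2^j*3^i + 9*(-1)^i*(2^i + 2^j) + 9*2^i) \<and>
         of_int (m s1) = (1/24::rat) * (1 - (-1)^j) *
            (6^i + 2^i*3^j + 2^j*3^i + 3*(-1)^i*(2^i + 2^j) - 3*2^i) \<and>
         of_int (m (s1 \<circ> s2)) = (1/24::rat) * (1 + (-1)^j) *
            (6^i + 2^i*3^j + 2^j*3^i) \<and>
         of_int (m (s1 \<circ> s3)) = (1/24::rat) * (1 + (-1)^j) *
            (6^i + 2^i*3^j + 2^j*3^i - 3*(-1)^i*(2^i + 2^j) - 3*2^i) \<and>
         of_int (m (s1 \<circ> s2 \<circ> s3)) = (1/24::rat) * (1 - (-1)^j) *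
            (6^i + 2^i*3^j + 2^j*3^i - 3*(-1)^i*(2^i + 2^j) + 3*2^i)"
proof -
  have coefficient: "of_int (m (word_perm ws)) = (1/48::rat) * of_int
         (\<Sum>(c2, c3, c4, vals)\<leftarrow>eigen_table.
            (c2^i * c3^i * c4^j + c2^i * c3^j * c4^i + c2^j * c3^i * c4^i) * word_coeff vals ws)"
    if "ws \<in> set S4_words" for ws
    unfolding m_def msym_JM_iij_coefficient[OF assms(1-3) that, symmetric] by simp
  have six: "(6::rat) ^ i = 2 ^ i * 3 ^ i" by (simp flip: power_mult_distrib)
  have pos: "i \<noteq> 0" "j \<noteq> 0" using assms by auto
  txt \<open>Evaluate the table at the five words, then split on the parities of i and j
    to resolve the powers of negative contents.\<close>
  show ?thesis
    unfolding s123_word unfolding s12_word s13_word unfolding s1_word id_word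
    apply (simp add: coefficient S4_words_def eigen_table_def word_coeff_def)
    apply (cases "even i"; cases "even j"; simp_all add: pos six algebra_simps power_0_left)
    done
qed

end
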